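(* Let $d\ge1$, $M>0$, and let $f:[0,1]^d\to\mathbb{R}$ satisfy $|f(x)-f(y)|\le M\|x-y\|_\infty$ for all $x,y\in[0,1]^d$; let $g(x)=f(x)\bmod 1$. Let $m>1$ be an integer, $x_i=\frac{i-1}{m-1}$ for $i\in[m]$, and for $\mathbf{i}=(i_1,\dots,i_d)\in[m]^d$ let $x_{\mathbf i}=(x_{i_1},\dots,x_{i_d})$; let $\mathcal X=\{x_{\mathbf i}:\mathbf i\in[m]^d\}$. Let $\delta\in[0,1/2]$ and $\hat g:[0,1]^d\to[0,1)$ satisfy $d_w(\hat g(x_{\mathbf i}),g(x_{\mathbf i}))\le\delta$ for all $\mathbf i\in[m]^d$. Define values $\tilde f(x_{\mathbf i})$ for all $\mathbf i\in[m]^d$ by the following sequential procedure: set $\tilde f(x_{(1,\dots,1)})=\hat g(x_{(1,\dots,1)})$ (the corner $(0,\dots,0)$); then for $j=1,\dots,d$, for each $(i_1,\dots,i_{j-1})\in[m]^{j-1}$ (a single empty tuple when $j=1$), with $i_{j+1}=\dots=i_d=1$, and for $i_j=2,\dots,m$ in increasing order, set $$\tilde f(x_{\mathbf i})=\tilde f(x_{\mathbf i-e_j})+\begin{cases}D_j\hat g(x_{\mathbf i}) & \text{if } |D_j\hat g(x_{\mathbf i})|<1/2,\\ 1+D_j\hat g(x_{\mathbf i}) & \text{if } D_j\hat g(x_{\mathbf i})<-1/2,\\ -1+D_j\hat g(x_{\mathbf i}) & \text{if } D_j\hat g(x_{\mathbf i})>1/2,\end{cases}$$ where $\mathbf i=(i_1,\dots,i_j,1,\dots,1)$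 and $\mathbf i-e_j=(i_1,\dots,i_j-1,1,\dots,1)$. If $2\delta+\frac{M}{m-1}<\frac12$, then there exists $q^\star\in\mathbb{Z}$ such that $|\tilde f(x_{\mathbf i})+q^\star-f(x_{\mathbf i})|\le\delta$ for all $x_{\mathbf i}\in\mathcal X$.
   Context: For $a\in\mathbb{R}$, $a\bmod1=a-\lfloor a\rfloor\in[0,1)$. The wrap-around distance on $[0,1)$ is $d_w(a,b)=\min(|a-b|,1-|a-b|)$. $[m]=\{1,\dots,m\}$. For a function $h$ on the grid and $\mathbf i\in[m]^d$ with $i_j>1$, $D_jh(x_{\mathbf i})=h(x_{i_1},\dots,x_{i_j},\dots,x_{i_d})-h(x_{i_1},\dots,x_{i_j-1},\dots,x_{i_d})$. The procedure visits every grid point exactly once, each after its predecessor along coordinate $j$ has been assigned. *)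

theory Defs
  imports Complex_Main
begin

text \<open>Points of [0,1]^d are represented as functions nat => real whose coordinates
 0..d-1 are the d coordinates (coordinate k corresponds to the (k+1)-st coordinate
 of the paper) and which vanish at coordinates >= d.\<close>

definition cube :: "nat \<Rightarrow> (nat \<Rightarrow> real) set" where
  "cube d = {x. (\<forall>k<d. 0 \<le> x k \<and> x k \<le> 1) \<and> (\<forall>k\<ge>d. x k = 0)}"

definition supdist :: "nat \<Rightarrow> (nat \<Rightarrow> real) \<Rightarrow> (nat \<Rightarrow> real) \<Rightarrow> real" where
  "supdist d x y = Max ((\<lambda>k. \<bar>x k - y k\<bar>) ` {..<d})"

definition wrapdist :: "real \<Rightarrow> real \<Rightarrow> real" where
  "wrapdist a b = min \<bar>a - b\<bar> (1 - \<bar>a - b\<bar>)"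

definition grid :: "nat \<Rightarrow> nat \<Rightarrow> (nat \<Rightarrow> nat) set" where
  "grid d m = {i. (\<forall>k<d. 1 \<le> i k \<and> i k \<le> m) \<and> (\<forall>k\<ge>d. i k = 1)}"

definition gridpt :: "nat \<Rightarrow> (nat \<Rightarrow> nat) \<Rightarrow> (nat \<Rightarrow> real)" where
  "gridpt m i = (\<lambda>k. (real (i k) - 1) / (real m - 1))"

text \<open>The correction term added in the procedure (the case |t| = 1/2 is not
 specified by the paper; we keep t unchanged there).\<close>
definition wrapstep :: "real \<Rightarrow> real" where
  "wrapstep t = (if \<bar>t\<bar> < 1/2 then t else if t < -1/2 then 1 + t
                 else if t > 1/2 then -1 + t else t)"

text \<open>The sequential procedure: at the corner, ftilde = ghat; otherwise let j be the
 largest coordinate with i_j > 1 (so i_{j+1} = ... = i_d = 1); the value at i is the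
 value at i - e_j plus wrapstep (D_j ghat (x_i)).\<close>
function ftilde :: "nat \<Rightarrow> nat \<Rightarrow> ((nat \<Rightarrow> real) \<Rightarrow> real) \<Rightarrow> (nat \<Rightarrow> nat) \<Rightarrow> real" where
  "ftilde d m gh i =
     (if \<exists>k<d. 1 < i k then
        (let j = (GREATEST k. k < d \<and> 1 < i k); i' = i(j := i j - 1) in
           ftilde d m gh i' + wrapstep (gh (gridpt m i) - gh (gridpt m i')))
      else gh (gridpt m i))"
  by pat_completeness auto
termination
proof (relation "measure (\<lambda>(d, m, gh, i). \<Sum>k<d. i k)")
  show "wf (measure (\<lambda>(d, m, gh, i). \<Sum>k<d. i k))" by simp
next
  fix d m :: nat and gh :: "(nat \<Rightarrow> real) \<Rightarrow> real" and i :: "nat \<Rightarrow> nat" and j i'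
  assume ex: "\<exists>k<d. 1 < i k" and j: "j = (GREATEST k. k < d \<and> 1 < i k)"
    and i': "i' = i(j := i j - 1)"
  have jp: "j < d \<and> 1 < i j"
    using ex unfolding j by (metis (mono_tags, lifting) GreatestI_ex_nat less_imp_le_nat)
  have "(\<Sum>k<d. i' k) < (\<Sum>k<d. i k)"
    using jp i' by (intro sum_strict_mono_ex1) auto
  then show "((d, m, gh, i'), d, m, gh, i) \<in> measure (\<lambda>(d, m, gh, i). \<Sum>k<d. i k)"
    by simp
qed

end

theory Submission
  imports Defs
begin

text \<open>Choose integers p_i with |ghat(x_i) - f(x_i) - p_i| \<le> \<delta>. Along one step of the
 procedure, D_j ghat(x_i) differs from the increment s of ghat - p by the integer
 p_i - p_(i-e_j), while |s| \<le> 2\<delta> + M/(m-1) < 1/2 by the Lipschitz bound; since also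
 |D_j ghat(x_i)| < 1, the correction wrapstep removes exactly that integer. Hence the
 procedure telescopes to ftilde(x_i) = ghat(x_i) - p_i + p_(1,...,1), and
 q = -p_(1,...,1) works.\<close>

lemma wrapstep_eq_of_int_shift:
  fixes s t :: real and n :: int
  assumes "\<bar>s\<bar> < 1/2" and "\<bar>t\<bar> < 1" and "t = s + of_int n"
  shows "wrapstep t = s"
proof -
  have "n = -1 \<or> n = 0 \<or> n = 1"
    using assms by linarith
  then consider "t = s - 1" | "t = s" | "t = s + 1"
    using assms(3) by force
  then show ?thesis
    using assms(1) unfolding wrapstep_def by cases (simp_all add: abs_less_iff)
qed

lemma wrapdist_le_imp_int_shift:
  fixes a b \<delta> :: real
  assumes "wrapdist a b \<le> \<delta>" and "\<bar>a - b\<bar> \<le> 1"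
  shows "\<exists>p::int. \<bar>a - b - of_int p\<bar> \<le> \<delta>"
proof (cases "\<bar>a - b\<bar> \<le> \<delta>")
  case True
  then show ?thesis
    by (intro exI[of _ 0]) simp
next
  case False
  then have "1 - \<bar>a - b\<bar> \<le> \<delta>"
    using assms(1) unfolding wrapdist_def by linarith
  then have "\<bar>a - b - of_int (if a \<ge> b then 1 else -1)\<bar> \<le> \<delta>"
    using assms(2) by (auto simp: abs_if split: if_splits)
  then show ?thesis ..
qed

lemma wrapdist_frac_le_imp_int_shift:
  fixes a b \<delta> :: real
  assumes "wrapdist a (frac b) \<le> \<delta>" and "0 \<le> a" and "a < 1"
  shows "\<exists>p::int. \<bar>a - b - of_int p\<bar> \<le> \<delta>"
proof -
  have "\<bar>a - frac b\<bar> \<le> 1"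
    using assms(2,3) frac_ge_0[of b] frac_lt_1[of b] by linarith
  then obtain p :: int where "\<bar>a - frac b - of_int p\<bar> \<le> \<delta>"
    using wrapdist_le_imp_int_shift[OF assms(1)] by blast
  then have "\<bar>a - b - of_int (p - \<lfloor>b\<rfloor>)\<bar> \<le> \<delta>"
    by (simp add: frac_def algebra_simps)
  then show ?thesis ..
qed

lemma supdist_le:
  assumes "d > 0" and "\<And>k. k < d \<Longrightarrow> \<bar>x k - y k\<bar> \<le> r"
  shows "supdist d x y \<le> r"
  using assms unfolding supdist_def by (simp add: Max_le_iff lessThan_empty_iff)

lemma gridpt_in_cube:
  assumes "i \<in> grid d m" and "m > 1"
  shows "gridpt m i \<in> cube d"
proof -
  have "real m - 1 > 0"
    using assms(2) by simp
  then show ?thesis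
    using assms(1) unfolding grid_def cube_def gridpt_def by (auto simp: divide_simps)
qed

lemma gridpt_decr_dist:
  assumes "m > 1"
  shows "\<bar>gridpt m i k - gridpt m (i(j := i j - 1)) k\<bar> \<le> 1 / (real m - 1)"
proof -
  have pos: "real m - 1 > 0"
    using assms by simp
  have "\<bar>real (i j) - real (i j - 1)\<bar> \<le> 1"
    by (cases "i j") auto
  then have "\<bar>real (i j) - real (i j - 1)\<bar> / (real m - 1) \<le> 1 / (real m - 1)"
    using pos by (simp add: divide_right_mono)
  then show ?thesis
    using pos unfolding gridpt_def by (auto simp: diff_divide_distrib[symmetric] abs_divide)
qed

definition grid_pred :: "nat \<Rightarrow> (nat \<Rightarrow> nat) \<Rightarrow> (nat \<Rightarrow> nat)" where
  "grid_pred d i = (let j = (GREATEST k. k < d \<and> 1 < i k) in i(j := i j - 1))"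

lemma grid_pred_eq:
  assumes "\<exists>k<d. 1 < i k"
  obtains j where "j < d" and "1 < i j" and "grid_pred d i = i(j := i j - 1)"
proof
  let ?j = "GREATEST k. k < d \<and> 1 < i k"
  have "?j < d \<and> 1 < i ?j"
    using assms by (metis (mono_tags, lifting) GreatestI_ex_nat less_imp_le_nat)
  then show "?j < d" and "1 < i ?j"
    by auto
  show "grid_pred d i = i(?j := i ?j - 1)"
    unfolding grid_pred_def Let_def ..
qed

lemma grid_pred_in_grid:
  assumes "i \<in> grid d m" and "\<exists>k<d. 1 < i k"
  shows "grid_pred d i \<in> grid d m"
proof -
  obtain j where "j < d" and "1 < i j" and "grid_pred d i = i(j := i j - 1)"
    using grid_pred_eq[OF assms(2)] by blast
  then show ?thesis
    using assms(1) by (auto simp: grid_def)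
qed

declare ftilde.simps [simp del]

lemma ftilde_corner:
  assumes "\<not> (\<exists>k<d. 1 < i k)"
  shows "ftilde d m gh i = gh (gridpt m i)"
  by (subst ftilde.simps, subst if_not_P[OF assms], rule refl)

lemma ftilde_step:
  assumes "\<exists>k<d. 1 < i k"
  shows "ftilde d m gh i =
    ftilde d m gh (grid_pred d i) + wrapstep (gh (gridpt m i) - gh (gridpt m (grid_pred d i)))"
  using assms unfolding grid_pred_def by (subst ftilde.simps) (simp add: Let_def)

lemma grid_corner:
  assumes "i \<in> grid d m" and "\<not> (\<exists>k<d. 1 < i k)"
  shows "i = (\<lambda>_. 1)"
proof
  fix k
  show "i k = 1"
    using assms unfolding grid_def by (cases "k < d") force+
qed

lemma ftilde_telescope:
  fixes h :: "(nat \<Rightarrow> nat) \<Rightarrow> real"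
  assumes steps: "\<And>i. i \<in> grid d m \<Longrightarrow> \<exists>k<d. 1 < i k \<Longrightarrow>
      wrapstep (gh (gridpt m i) - gh (gridpt m (grid_pred d i))) = h i - h (grid_pred d i)"
    and "i \<in> grid d m"
  shows "ftilde d m gh i = gh (gridpt m (\<lambda>_. 1)) + h i - h (\<lambda>_. 1)"
  using assms
proof (induction d m gh i rule: ftilde.induct)
  case (1 d m gh i)
  note steps = "1.prems"(1) and i = "1.prems"(2)
  show ?case
  proof (cases "\<exists>k<d. 1 < i k")
    case True
    have "ftilde d m gh (grid_pred d i) = gh (gridpt m (\<lambda>_. 1)) + h (grid_pred d i) - h (\<lambda>_. 1)"
      by (rule "1.IH"[OF True refl refl, folded grid_pred_def[unfolded Let_def],
            OF steps grid_pred_in_grid[OF i True]])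
    then show ?thesis
      using ftilde_step[OF True] steps[OF i True] by simp
  next
    case False
    then show ?thesis
      using ftilde_corner[OF False] grid_corner[OF i False] by simp
  qed
qed

lemma grid_pred_lipschitz_step:
  assumes "i \<in> grid d m" and "\<exists>k<d. 1 < i k" and "m > 1" and "M \<ge> 0"
    and "\<forall>x\<in>cube d. \<forall>y\<in>cube d. \<bar>f x - f y\<bar> \<le> M * supdist d x y"
  shows "\<bar>f (gridpt m i) - f (gridpt m (grid_pred d i))\<bar> \<le> M / (real m - 1)"
proof -
  obtain j where j: "j < d" and pred: "grid_pred d i = i(j := i j - 1)"
    using grid_pred_eq[OF assms(2)] by blast
  have "supdist d (gridpt m i) (gridpt m (grid_pred d i)) \<le> 1 / (real m - 1)"
    unfolding pred using j gridpt_decr_dist[OF assms(3)] by (intro supdist_le) auto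
  then have "M * supdist d (gridpt m i) (gridpt m (grid_pred d i)) \<le> M / (real m - 1)"
    using mult_left_mono[OF _ assms(4)] by fastforce
  moreover have "gridpt m i \<in> cube d" and "gridpt m (grid_pred d i) \<in> cube d"
    using assms(1-3) grid_pred_in_grid gridpt_in_cube by blast+
  ultimately show ?thesis
    using assms(5) by fastforce
qed

theorem mainTheorem4:
  fixes d m :: nat and M \<delta> :: real and f gh :: "(nat \<Rightarrow> real) \<Rightarrow> real"
  assumes "d \<ge> 1" and "M > 0"
    and "\<forall>x\<in>cube d. \<forall>y\<in>cube d. \<bar>f x - f y\<bar> \<le> M * supdist d x y"
    and "m > 1"
    and "0 \<le> \<delta>" and "\<delta> \<le> 1/2"
    and "\<forall>x\<in>cube d. 0 \<le> gh x \<and> gh x < 1"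
    and "\<forall>i\<in>grid d m. wrapdist (gh (gridpt m i)) (frac (f (gridpt m i))) \<le> \<delta>"
    and "2 * \<delta> + M / (real m - 1) < 1/2"
  shows "\<exists>q::int. \<forall>i\<in>grid d m. \<bar>ftilde d m gh i + real_of_int q - f (gridpt m i)\<bar> \<le> \<delta>"
proof -
  have gh_range: "0 \<le> gh (gridpt m i) \<and> gh (gridpt m i) < 1" if "i \<in> grid d m" for i
    using assms(4,7) gridpt_in_cube[OF that] by blast
  have "\<exists>p::int. \<bar>gh (gridpt m i) - f (gridpt m i) - of_int p\<bar> \<le> \<delta>" if "i \<in> grid d m" for i
    using wrapdist_frac_le_imp_int_shift assms(8) gh_range[OF that] that by blast
  then obtain p :: "(nat \<Rightarrow> nat) \<Rightarrow> int"
    where p: "\<And>i. i \<in> grid d m \<Longrightarrow> \<bar>gh (gridpt m i) - f (gridpt m i) - of_int (p i)\<bar> \<le> \<delta>"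
    by metis
  define h where "h i = gh (gridpt m i) - of_int (p i)" for i
  have "wrapstep (gh (gridpt m i) - gh (gridpt m (grid_pred d i))) = h i - h (grid_pred d i)"
    if i: "i \<in> grid d m" and step: "\<exists>k<d. 1 < i k" for i
  proof (rule wrapstep_eq_of_int_shift[where n = "p i - p (grid_pred d i)"])
    have pred: "grid_pred d i \<in> grid d m"
      using i step by (rule grid_pred_in_grid)
    have "\<bar>f (gridpt m i) - f (gridpt m (grid_pred d i))\<bar> \<le> M / (real m - 1)"
      using grid_pred_lipschitz_step[OF i step assms(4) _ assms(3)] assms(2) by simp
    then show "\<bar>h i - h (grid_pred d i)\<bar> < 1/2"
      using p[OF i] p[OF pred] assms(9) unfolding h_def abs_le_iff abs_less_iff by linarith
    show "\<bar>gh (gridpt m i) - gh (gridpt m (grid_pred d i))\<bar> < 1"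
      using gh_range[OF i] gh_range[OF pred] unfolding abs_less_iff by linarith
  qed (simp add: h_def)
  then have ftilde_eq: "ftilde d m gh i = h i + of_int (p (\<lambda>_. 1))" if "i \<in> grid d m" for i
    using ftilde_telescope[OF _ that] by (simp add: h_def)
  show ?thesis
  proof (intro exI[of _ "- p (\<lambda>_. 1)"] ballI)
    fix i
    assume i: "i \<in> grid d m"
    have "ftilde d m gh i + of_int (- p (\<lambda>_. 1)) - f (gridpt m i)
        = gh (gridpt m i) - f (gridpt m i) - of_int (p i)"
      using ftilde_eq[OF i] by (simp add: h_def)
    then show "\<bar>ftilde d m gh i + of_int (- p (\<lambda>_. 1)) - f (gridpt m i)\<bar> \<le> \<delta>"
      using p[OF i] by simp
  qed
qed

end
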